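(* Let $G$ be a connected graph of order $n$ with chromatic number $\chi(G)=2$. If $n$ is even, then $ABC(G)\leq \frac{n}{2}\sqrt{n-2}$, with equality if and only if $G\cong T_{n,2}$. If $n$ is odd, then $ABC(G)\leq \frac{1}{2}\sqrt{(n-2)(n^2-1)}$, with equality if and only if $G\cong T_{n,2}$.
   Context: For a simple graph $G$, $ABC(G)=\sum_{uv\in E(G)}\sqrt{\frac{d(u)+d(v)-2}{d(u)d(v)}}$, where $d(u)$ is the degree of $u$. The chromatic number is the least number of colors in a proper vertex coloring. $T_{n,t}$ denotes the complete $t$-partite graph on $n$ vertices whose part sizes $n_1,\dots,n_t$ satisfy $|n_i-n_j|\leq 1$ for all $i,j$; so $T_{n,2}=K_{\lfloor n/2\rfloor,\lceil n/2\rceil}$. *)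

theory Defs
  imports Complex_Main
begin

definition simple_graph :: "'a set \<Rightarrow> ('a \<Rightarrow> 'a \<Rightarrow> bool) \<Rightarrow> bool" where
  "simple_graph V E \<longleftrightarrow> finite V \<and> (\<forall>u v. E u v \<longrightarrow> u \<in> V \<and> v \<in> V)
     \<and> (\<forall>u v. E u v \<longrightarrow> E v u) \<and> (\<forall>v. \<not> E v v)"

definition graph_connected :: "'a set \<Rightarrow> ('a \<Rightarrow> 'a \<Rightarrow> bool) \<Rightarrow> bool" where
  "graph_connected V E \<longleftrightarrow> V \<noteq> {} \<and> (\<forall>u\<in>V. \<forall>v\<in>V. E\<^sup>*\<^sup>* u v)"

definition degree :: "'a set \<Rightarrow> ('a \<Rightarrow> 'a \<Rightarrow> bool) \<Rightarrow> 'a \<Rightarrow> nat" where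
  "degree V E v = card {u \<in> V. E v u}"

definition edges :: "'a set \<Rightarrow> ('a \<Rightarrow> 'a \<Rightarrow> bool) \<Rightarrow> 'a set set" where
  "edges V E = {{u, v} | u v. u \<in> V \<and> v \<in> V \<and> E u v}"

definition ABC :: "'a set \<Rightarrow> ('a \<Rightarrow> 'a \<Rightarrow> bool) \<Rightarrow> real" where
  "ABC V E = (\<Sum>e\<in>edges V E.
     sqrt ((real (\<Sum>v\<in>e. degree V E v) - 2) / real (\<Prod>v\<in>e. degree V E v)))"

definition colorable :: "'a set \<Rightarrow> ('a \<Rightarrow> 'a \<Rightarrow> bool) \<Rightarrow> nat \<Rightarrow> bool" where
  "colorable V E k \<longleftrightarrow> (\<exists>c :: 'a \<Rightarrow> nat. (\<forall>v\<in>V. c v < k)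
      \<and> (\<forall>u\<in>V. \<forall>v\<in>V. E u v \<longrightarrow> c u \<noteq> c v))"

definition chromatic_number :: "'a set \<Rightarrow> ('a \<Rightarrow> 'a \<Rightarrow> bool) \<Rightarrow> nat" where
  "chromatic_number V E = (LEAST k. colorable V E k)"

text \<open>Turan graph T_{n,t}: vertices 0..n-1, parts given by residues mod t
  (part sizes differ by at most one), complete multipartite.\<close>
definition turan_V :: "nat \<Rightarrow> nat set" where
  "turan_V n = {..<n}"

definition turan_E :: "nat \<Rightarrow> nat \<Rightarrow> nat \<Rightarrow> nat \<Rightarrow> bool" where
  "turan_E n t i j \<longleftrightarrow> i < n \<and> j < n \<and> i mod t \<noteq> j mod t"

definition graph_iso :: "'a set \<Rightarrow> ('a \<Rightarrow> 'a \<Rightarrow> bool) \<Rightarrow> 'b set \<Rightarrow> ('b \<Rightarrow> 'b \<Rightarrow> bool) \<Rightarrow> bool" where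
  "graph_iso V E W F \<longleftrightarrow> (\<exists>f. bij_betw f V W \<and> (\<forall>u\<in>V. \<forall>v\<in>V. E u v \<longleftrightarrow> F (f u) (f v)))"

end

theory Submission
  imports Defs "HOL-Analysis.Convex"
begin

text \<open>
  A 2-colouring splits G into parts A, B of sizes a, b, and every edge uv joins u \<in> A to v \<in> B;
  connectedness rules out isolated vertices. For m edges, Cauchy--Schwarz gives
  ABC(G)^2 \<le> m \<Sum>(1/d(u) + 1/d(v) - 2/(d(u)d(v))) = m (n - 2 \<Sum> 1/(d(u)d(v))),
  since each vertex w contributes 1/d(w) exactly d(w) times. As d(u) \<le> b and d(v) \<le> a this is
  at most m (n - 2m/(ab)) \<le> ab (n - 2), with equality only if m = ab, i.e. G is complete bipartite.
  Finally ab \<le> \<lceil>n/2\<rceil>\<lfloor>n/2\<rfloor> with equality iff the parts are balanced, and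
  sqrt(\<lceil>n/2\<rceil>\<lfloor>n/2\<rfloor>(n - 2)) is ABC of the complete bipartite graph T_{n,2}.
\<close>

lemma balanced_split_gap:
  fixes a b n :: nat
  assumes "a + b = n" "a \<le> b"
  shows "a \<le> n div 2"
    and "int ((n + 1) div 2 * (n div 2)) - int (a * b)
           = (int (n div 2) - int a) * (int ((n + 1) div 2) - int a)"
proof -
  show "a \<le> n div 2" using assms by linarith
  have b: "int b = int ((n + 1) div 2) + int (n div 2) - int a" using assms(1) by linarith
  show "int ((n + 1) div 2 * (n div 2)) - int (a * b)
          = (int (n div 2) - int a) * (int ((n + 1) div 2) - int a)"
    unfolding of_nat_mult b by (simp add: algebra_simps)
qed

lemma mult_le_balanced_split:
  fixes a b n :: nat
  assumes "a + b = n"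
  shows "a * b \<le> (n + 1) div 2 * (n div 2)"
proof -
  have le: "a * b \<le> (n + 1) div 2 * (n div 2)" if "a + b = n" "a \<le> b" for a b
  proof -
    have "0 \<le> (int (n div 2) - int a) * (int ((n + 1) div 2) - int a)"
      using balanced_split_gap(1)[OF that] by (intro mult_nonneg_nonneg) linarith+
    then show ?thesis using balanced_split_gap(2)[OF that] by linarith
  qed
  show ?thesis using le[of a b] le[of b a] assms by (cases "a \<le> b") (simp_all add: mult.commute)
qed

lemma mult_eq_balanced_split_iff:
  fixes a b n :: nat
  assumes "a + b = n"
  shows "a * b = (n + 1) div 2 * (n div 2) \<longleftrightarrow> a = n div 2 \<or> b = n div 2"
proof -
  have eq: "a * b = (n + 1) div 2 * (n div 2) \<longleftrightarrow> a = n div 2"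
    if "a + b = n" "a \<le> b" for a b
  proof -
    have "a * b = (n + 1) div 2 * (n div 2) \<longleftrightarrow>
          (int (n div 2) - int a) * (int ((n + 1) div 2) - int a) = 0"
      unfolding balanced_split_gap(2)[OF that, symmetric] by linarith
    also have "\<dots> \<longleftrightarrow> a = n div 2"
      using balanced_split_gap(1)[OF that] by auto
    finally show ?thesis .
  qed
  show ?thesis
    using eq[of a b] eq[of b a] assms by (cases "a \<le> b") (auto simp: mult.commute)
qed

lemma mult_diff_ratio_le:
  fixes m p n :: real
  assumes "0 < p" "0 \<le> m" "m \<le> p" "4 \<le> n"
  shows "m * (n - 2 * m / p) \<le> p * (n - 2)"
    and "m < p \<Longrightarrow> m * (n - 2 * m / p) < p * (n - 2)"
proof -
  have gap: "p * (n - 2) - m * (n - 2 * m / p) = (p - m) * (p * n - 2 * p - 2 * m) / p"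
    using assms(1) by (simp add: field_simps)
  have "p * 4 \<le> p * n" using assms by simp
  then have factor: "0 \<le> p * n - 2 * p - 2 * m" using assms by linarith
  have "0 \<le> (p - m) * (p * n - 2 * p - 2 * m) / p"
    using factor assms by (intro divide_nonneg_pos mult_nonneg_nonneg) auto
  then show "m * (n - 2 * m / p) \<le> p * (n - 2)" using gap by linarith
  assume "m < p"
  then have "0 < p * n - 2 * p - 2 * m" using \<open>p * 4 \<le> p * n\<close> by linarith
  then have "0 < (p - m) * (p * n - 2 * p - 2 * m) / p"
    using \<open>m < p\<close> assms(1) by (intro divide_pos_pos mult_pos_pos) auto
  then show "m * (n - 2 * m / p) < p * (n - 2)" using gap by linarith
qed

lemma sqrt_balanced_product_even:
  "even n \<Longrightarrow> sqrt (real ((n + 1) div 2 * (n div 2)) * (real n - 2)) = real n / 2 * sqrt (real n - 2)"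
  by (elim evenE) (simp add: real_sqrt_mult)

lemma sqrt_balanced_product_odd:
  assumes "odd n"
  shows "sqrt (real ((n + 1) div 2 * (n div 2)) * (real n - 2))
           = 1 / 2 * sqrt ((real n - 2) * (real n ^ 2 - 1))"
proof -
  obtain k where n: "n = 2 * k + 1" using assms by (elim oddE)
  have factor: "(real n - 2) * (real n ^ 2 - 1) = 2 * 2 * (real ((n + 1) div 2 * (n div 2)) * (real n - 2))"
    unfolding n by (simp add: power2_eq_square algebra_simps)
  show ?thesis unfolding factor real_sqrt_mult[of "2 * 2"] by simp
qed

lemma mult_sqrt_divide: "0 \<le> (p :: real) \<Longrightarrow> p * sqrt (x / p) = sqrt (p * x)"
  by (cases "p = 0") (simp_all add: real_sqrt_mult real_sqrt_divide field_simps)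

definition abc_term :: "nat \<Rightarrow> nat \<Rightarrow> real" where
  "abc_term x y = sqrt ((real x + real y - 2) / (real x * real y))"

locale bipartite_graph =
  fixes V :: "'a set" and E :: "'a \<Rightarrow> 'a \<Rightarrow> bool" and A B :: "'a set"
  assumes simple: "simple_graph V E"
    and parts: "V = A \<union> B"
    and disjoint_parts: "A \<inter> B = {}"
    and edge_across: "E u v \<Longrightarrow> u \<in> A \<longleftrightarrow> v \<in> B"
begin

lemma finite_V: "finite V"
  and edge_in_V: "E u v \<Longrightarrow> u \<in> V \<and> v \<in> V"
  and edge_sym: "E u v \<Longrightarrow> E v u"
  using simple unfolding simple_graph_def by auto

lemma finite_A: "finite A" and finite_B: "finite B"
  using finite_V parts by auto

lemma card_V: "card V = card A + card B"
  using parts disjoint_parts finite_A finite_B by (simp add: card_Un_disjoint)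

lemma bipartite_graph_swap: "bipartite_graph V E B A"
  by unfold_locales (use simple parts disjoint_parts edge_across edge_sym in blast)+

lemma neighbours_subset_B: "u \<in> A \<Longrightarrow> {w \<in> V. E u w} \<subseteq> B"
  using edge_across by blast

lemma degree_le_card_B: "u \<in> A \<Longrightarrow> degree V E u \<le> card B"
  unfolding degree_def using neighbours_subset_B finite_B by (rule card_mono[rotated])

definition cross_edges :: "('a \<times> 'a) set" where
  "cross_edges = {(u, v) \<in> A \<times> B. E u v}"

lemma cross_edges_subset: "cross_edges \<subseteq> A \<times> B"
  unfolding cross_edges_def by auto

lemma card_cross_edges_le: "card cross_edges \<le> card A * card B"
  using card_mono[OF finite_cartesian_product[OF finite_A finite_B] cross_edges_subset]
  by (simp add: card_cartesian_product)

lemma cross_edges_Sigma: "cross_edges = Sigma A (\<lambda>u. {v \<in> V. E u v})"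
  unfolding cross_edges_def using neighbours_subset_B parts by blast

lemma cross_edges_swap: "bipartite_graph.cross_edges E B A = prod.swap ` cross_edges"
proof -
  interpret swapped: bipartite_graph V E B A by (rule bipartite_graph_swap)
  show ?thesis
    unfolding swapped.cross_edges_def cross_edges_def using edge_sym by force
qed

lemma edges_eq_cross_edges: "edges V E = (\<lambda>(u, v). {u, v}) ` cross_edges"
proof
  show "(\<lambda>(u, v). {u, v}) ` cross_edges \<subseteq> edges V E"
    unfolding cross_edges_def edges_def using parts by auto
  show "edges V E \<subseteq> (\<lambda>(u, v). {u, v}) ` cross_edges"
  proof
    fix e assume "e \<in> edges V E"
    then obtain u v where e: "e = {u, v}" "u \<in> V" "v \<in> V" "E u v"
      unfolding edges_def by auto
    show "e \<in> (\<lambda>(u, v). {u, v}) ` cross_edges"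
    proof (cases "u \<in> A")
      case True
      then have "(u, v) \<in> cross_edges" using e edge_across unfolding cross_edges_def by auto
      then show ?thesis using e by force
    next
      case False
      then have "(v, u) \<in> cross_edges"
        using e edge_across edge_sym parts unfolding cross_edges_def by auto
      then show ?thesis using e by (force simp: insert_commute)
    qed
  qed
qed

lemma inj_on_cross_edges: "inj_on (\<lambda>(u, v). {u, v}) cross_edges"
  unfolding cross_edges_def inj_on_def using disjoint_parts by (auto simp: doubleton_eq_iff)

lemma ABC_eq_sum_cross_edges:
  "ABC V E = (\<Sum>(u, v)\<in>cross_edges. abc_term (degree V E u) (degree V E v))"
proof -
  have "u \<noteq> v" if "(u, v) \<in> cross_edges" for u v
    using that disjoint_parts unfolding cross_edges_def by auto
  then show ?thesis
    unfolding ABC_def edges_eq_cross_edges sum.reindex[OF inj_on_cross_edges]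
    by (intro sum.cong) (auto simp: abc_term_def)
qed

lemma complete_if_card_cross_edges:
  assumes "card cross_edges = card A * card B"
  shows "\<forall>u\<in>A. \<forall>v\<in>B. E u v"
proof -
  have "card cross_edges = card (A \<times> B)" using assms by (simp add: card_cartesian_product)
  then have "cross_edges = A \<times> B"
    using cross_edges_subset finite_A finite_B by (simp add: card_subset_eq)
  then show ?thesis unfolding cross_edges_def by auto
qed

lemma ABC_if_complete:
  assumes complete: "\<forall>u\<in>A. \<forall>v\<in>B. E u v"
  shows "ABC V E = sqrt (real (card A * card B) * (real (card V) - 2))"
proof -
  interpret swapped: bipartite_graph V E B A by (rule bipartite_graph_swap)
  have "{w \<in> V. E u w} = B" if "u \<in> A" for u
    using neighbours_subset_B[OF that] complete that parts by auto
  then have degree_A: "degree V E u = card B" if "u \<in> A" for u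
    using that by (simp add: degree_def)
  have "{w \<in> V. E v w} = A" if "v \<in> B" for v
    using swapped.neighbours_subset_B[OF that] complete edge_sym that parts by auto
  then have degree_B: "degree V E v = card A" if "v \<in> B" for v
    using that by (simp add: degree_def)
  have "cross_edges = A \<times> B" unfolding cross_edges_def using complete by auto
  then have "ABC V E = (\<Sum>(u, v)\<in>A \<times> B. abc_term (card B) (card A))"
    unfolding ABC_eq_sum_cross_edges by (intro sum.cong) (auto simp: degree_A degree_B)
  also have "\<dots> = real (card A * card B) * abc_term (card B) (card A)"
    by (simp add: card_cartesian_product)
  also have "abc_term (card B) (card A) = sqrt ((real (card V) - 2) / real (card A * card B))"
    unfolding abc_term_def card_V by (simp add: algebra_simps)
  also have "real (card A * card B) * \<dots> = sqrt (real (card A * card B) * (real (card V) - 2))"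
    by (simp add: mult_sqrt_divide)
  finally show ?thesis .
qed

context
  assumes no_isolated: "\<And>v. v \<in> V \<Longrightarrow> 0 < degree V E v"
begin

lemma exists_neighbour: "v \<in> V \<Longrightarrow> \<exists>w\<in>V. E v w"
  using no_isolated[of v] unfolding degree_def by (auto simp: card_gt_0_iff)

lemma sum_inverse_degree_A: "(\<Sum>(u, v)\<in>cross_edges. 1 / real (degree V E u)) = card A"
proof -
  have "(\<Sum>(u, v)\<in>cross_edges. 1 / real (degree V E u))
          = (\<Sum>u\<in>A. \<Sum>v\<in>{v \<in> V. E u v}. 1 / real (degree V E u))"
    unfolding cross_edges_Sigma using finite_A finite_V by (subst sum.Sigma) auto
  also have "\<dots> = (\<Sum>u\<in>A. 1)"
    using no_isolated parts by (intro sum.cong) (auto simp: degree_def)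
  finally show ?thesis by simp
qed

lemma sum_inverse_degree_B: "(\<Sum>(u, v)\<in>cross_edges. 1 / real (degree V E v)) = card B"
proof -
  interpret swapped: bipartite_graph V E B A by (rule bipartite_graph_swap)
  have "(\<Sum>(u, v)\<in>cross_edges. 1 / real (degree V E v))
          = (\<Sum>(u, v)\<in>prod.swap ` cross_edges. 1 / real (degree V E u))"
    by (subst sum.reindex) (auto simp: case_prod_beta)
  then show ?thesis
    using swapped.sum_inverse_degree_A[OF no_isolated] unfolding cross_edges_swap by simp
qed

lemma complete_if_card_A_eq_1:
  assumes "card A = 1"
  shows "\<forall>u\<in>A. \<forall>v\<in>B. E u v"
proof (intro ballI)
  fix u v assume u: "u \<in> A" and v: "v \<in> B"
  obtain w where "w \<in> V" "E v w" using exists_neighbour[of v] v parts by blast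
  then have "w \<in> A" using edge_across[of v w] v parts disjoint_parts by blast
  moreover have "A = {u}" using assms u by (metis card_1_singletonE singletonD)
  ultimately show "E u v" using edge_sym[OF \<open>E v w\<close>] by simp
qed

lemma complete_if_card_B_eq_1:
  assumes "card B = 1"
  shows "\<forall>u\<in>A. \<forall>v\<in>B. E u v"
proof -
  interpret swapped: bipartite_graph V E B A by (rule bipartite_graph_swap)
  show ?thesis
    using swapped.complete_if_card_A_eq_1[OF no_isolated assms] edge_sym by blast
qed

lemma cross_edge_degrees:
  assumes "(u, v) \<in> cross_edges"
  shows "0 < degree V E u" "0 < degree V E v" "degree V E u * degree V E v \<le> card A * card B"
proof -
  interpret swapped: bipartite_graph V E B A by (rule bipartite_graph_swap)
  have "u \<in> A" "v \<in> B" using assms unfolding cross_edges_def by auto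
  then show "0 < degree V E u" "0 < degree V E v" using no_isolated parts by auto
  have "degree V E u \<le> card B" "degree V E v \<le> card A"
    using degree_le_card_B swapped.degree_le_card_B \<open>u \<in> A\<close> \<open>v \<in> B\<close> by auto
  then show "degree V E u * degree V E v \<le> card A * card B"
    by (metis mult.commute mult_le_mono)
qed

lemma sum_abc_radicands:
  "(\<Sum>(u, v)\<in>cross_edges. (real (degree V E u) + real (degree V E v) - 2)
                              / (real (degree V E u) * real (degree V E v)))
     = real (card V) - 2 * (\<Sum>(u, v)\<in>cross_edges. 1 / (real (degree V E u) * real (degree V E v)))"
proof -
  have "(\<Sum>(u, v)\<in>cross_edges. (real (degree V E u) + real (degree V E v) - 2)
                              / (real (degree V E u) * real (degree V E v)))
     = (\<Sum>(u, v)\<in>cross_edges. 1 / real (degree V E u) + 1 / real (degree V E v)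
                              - 2 / (real (degree V E u) * real (degree V E v)))"
    using cross_edge_degrees by (intro sum.cong) (auto simp: field_simps)
  then show ?thesis
    using sum_inverse_degree_A sum_inverse_degree_B card_V
    by (simp add: case_prod_beta sum.distrib sum_subtractf sum_distrib_left)
qed

lemma card_cross_edges_div_le:
  "real (card cross_edges) / real (card A * card B)
     \<le> (\<Sum>(u, v)\<in>cross_edges. 1 / (real (degree V E u) * real (degree V E v)))"
proof -
  have "(\<Sum>e\<in>cross_edges. 1 / real (card A * card B))
          \<le> (\<Sum>(u, v)\<in>cross_edges. 1 / (real (degree V E u) * real (degree V E v)))"
  proof (rule sum_mono)
    fix e assume "e \<in> cross_edges"
    moreover obtain u v where "e = (u, v)" by force
    ultimately have "(u, v) \<in> cross_edges" by simp
    then have "0 < degree V E u * degree V E v"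
      and "real (degree V E u * degree V E v) \<le> real (card A * card B)"
      using cross_edge_degrees[of u v] by (simp, simp only: of_nat_le_iff)
    then show "1 / real (card A * card B)
                 \<le> (case e of (u, v) \<Rightarrow> 1 / (real (degree V E u) * real (degree V E v)))"
      using \<open>e = (u, v)\<close> by (simp add: frac_le)
  qed
  then show ?thesis by simp
qed

lemma ABC_le_cross_edges:
  defines "m \<equiv> real (card cross_edges)"
  shows "ABC V E \<le> sqrt (m * (real (card V) - 2 * m / real (card A * card B)))"
proof -
  let ?d = "\<lambda>u. real (degree V E u)"
  let ?r = "\<lambda>(u, v). (?d u + ?d v - 2) / (?d u * ?d v)"
  have "0 \<le> ?r e" if "e \<in> cross_edges" for e
  proof -
    obtain u v where e: "e = (u, v)" by force
    then have "1 \<le> ?d u" "1 \<le> ?d v" using that cross_edge_degrees by (simp_all add: Suc_le_eq)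
    then show ?thesis using e by simp
  qed
  then have "(\<Sum>e\<in>cross_edges. (sqrt (?r e))\<^sup>2) = (\<Sum>e\<in>cross_edges. ?r e)"
    by (intro sum.cong) auto
  moreover have "(ABC V E)\<^sup>2 = (\<Sum>e\<in>cross_edges. sqrt (?r e))\<^sup>2"
    unfolding ABC_eq_sum_cross_edges abc_term_def by (simp add: case_prod_beta)
  moreover have "(\<Sum>e\<in>cross_edges. sqrt (?r e))\<^sup>2 \<le> (\<Sum>e\<in>cross_edges. (sqrt (?r e))\<^sup>2) * m"
    unfolding m_def by (rule sum_squared_le_sum_of_squares)
  ultimately have "(ABC V E)\<^sup>2 \<le> (real (card V) - 2 * (\<Sum>(u, v)\<in>cross_edges. 1 / (?d u * ?d v))) * m"
    using sum_abc_radicands by (simp add: case_prod_beta)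
  also have "\<dots> \<le> (real (card V) - 2 * (m / real (card A * card B))) * m"
    using card_cross_edges_div_le unfolding m_def by (intro mult_right_mono) auto
  finally have "(ABC V E)\<^sup>2 \<le> m * (real (card V) - 2 * m / real (card A * card B))"
    by (simp add: mult.commute)
  then show ?thesis by (rule real_le_rsqrt)
qed

lemma parts_nonempty:
  assumes "V \<noteq> {}"
  shows "A \<noteq> {}" "B \<noteq> {}"
proof -
  obtain x where "x \<in> V" using assms by blast
  then obtain y where "E x y" using exists_neighbour by blast
  then show "A \<noteq> {}" "B \<noteq> {}" using edge_across[OF \<open>E x y\<close>] edge_in_V parts by blast+
qed

lemma ABC_le_parts:
  assumes "V \<noteq> {}"
  shows "ABC V E \<le> sqrt (real (card A * card B) * (real (card V) - 2))"
    and "ABC V E = sqrt (real (card A * card B) * (real (card V) - 2)) \<Longrightarrow> \<forall>u\<in>A. \<forall>v\<in>B. E u v"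
proof -
  let ?m = "real (card cross_edges)" and ?bound = "sqrt (real (card A * card B) * (real (card V) - 2))"
  have parts_pos: "0 < card A" "0 < card B"
    using parts_nonempty[OF assms] finite_A finite_B by auto
  have m_le: "?m \<le> real (card A * card B)" using card_cross_edges_le by linarith
  \<comment> \<open>m(n - 2m/ab) increases in m on [0, ab] only when n \<ge> 4; for n \<le> 3 one part is a singleton\<close>
  consider (large) "4 \<le> card V" | (small) "\<forall>u\<in>A. \<forall>v\<in>B. E u v"
    using card_V parts_pos complete_if_card_A_eq_1 complete_if_card_B_eq_1 by linarith
  then have "ABC V E \<le> ?bound \<and> (ABC V E = ?bound \<longrightarrow> (\<forall>u\<in>A. \<forall>v\<in>B. E u v))"
  proof cases
    case large
    have "?m * (real (card V) - 2 * ?m / real (card A * card B))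
            \<le> real (card A * card B) * (real (card V) - 2)"
      using mult_diff_ratio_le(1) m_le parts_pos large by simp
    then have le: "ABC V E \<le> ?bound"
      using ABC_le_cross_edges by (meson order.trans real_sqrt_le_mono)
    have "ABC V E < ?bound" if "card cross_edges \<noteq> card A * card B"
    proof -
      have "?m < real (card A * card B)"
        using that card_cross_edges_le by (metis le_neq_implies_less of_nat_less_iff)
      then have "?m * (real (card V) - 2 * ?m / real (card A * card B))
              < real (card A * card B) * (real (card V) - 2)"
        using mult_diff_ratio_le(2) parts_pos large by simp
      then show ?thesis using ABC_le_cross_edges by (meson order.strict_trans1 real_sqrt_less_mono)
    qed
    then show ?thesis using le complete_if_card_cross_edges by force
  next
    case small
    then show ?thesis using ABC_if_complete by simp
  qed
  then show "ABC V E \<le> ?bound" "ABC V E = ?bound \<Longrightarrow> \<forall>u\<in>A. \<forall>v\<in>B. E u v" by blast+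
qed

end

end

definition complete_bipartite :: "'a set \<Rightarrow> ('a \<Rightarrow> 'a \<Rightarrow> bool) \<Rightarrow> 'a set \<Rightarrow> 'a set \<Rightarrow> bool" where
  "complete_bipartite V E A B \<longleftrightarrow>
     V = A \<union> B \<and> A \<inter> B = {} \<and> (\<forall>u\<in>V. \<forall>v\<in>V. E u v \<longleftrightarrow> (u \<in> A \<longleftrightarrow> v \<in> B))"

lemma complete_bipartite_swap: "complete_bipartite V E A B \<Longrightarrow> complete_bipartite V E B A"
  unfolding complete_bipartite_def by blast

lemma (in bipartite_graph) complete_bipartite_if_complete:
  "\<forall>u\<in>A. \<forall>v\<in>B. E u v \<Longrightarrow> complete_bipartite V E A B"
  unfolding complete_bipartite_def using parts disjoint_parts edge_across edge_sym by blast

lemma ABC_complete_bipartite: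
  assumes "simple_graph V E" "complete_bipartite V E A B"
  shows "ABC V E = sqrt (real (card A * card B) * (real (card V) - 2))"
proof -
  interpret bipartite_graph V E A B
  proof
    show "V = A \<union> B" "A \<inter> B = {}" using assms(2) unfolding complete_bipartite_def by auto
    fix u v assume "E u v"
    then have "u \<in> V" "v \<in> V" using assms(1) unfolding simple_graph_def by auto
    then show "u \<in> A \<longleftrightarrow> v \<in> B"
      using \<open>E u v\<close> assms(2) unfolding complete_bipartite_def by blast
  qed (rule assms(1))
  show ?thesis using assms(2) parts by (intro ABC_if_complete) (auto simp: complete_bipartite_def)
qed

lemma complete_bipartite_iso:
  assumes G: "complete_bipartite V E A B" and H: "complete_bipartite W F A' B'"
    and "finite A" "finite B" "finite A'" "finite B'" "card A = card A'" "card B = card B'"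
  shows "graph_iso V E W F"
proof -
  obtain g h where g: "bij_betw g A A'" and h: "bij_betw h B B'"
    using assms(3-) by (metis finite_same_card_bij)
  define f where "f u = (if u \<in> A then g u else h u)" for u
  have "bij_betw f A A'" using g by (rule bij_betw_cong[THEN iffD1, rotated]) (simp add: f_def)
  moreover have "bij_betw f B B'"
    using h G by (intro bij_betw_cong[THEN iffD1, OF _ h]) (auto simp: f_def complete_bipartite_def)
  ultimately have "bij_betw f (A \<union> B) (A' \<union> B')"
    using H by (intro bij_betw_combine) (auto simp: complete_bipartite_def)
  then have bij: "bij_betw f V W" using G H by (simp add: complete_bipartite_def)
  have "f u \<in> A' \<longleftrightarrow> u \<in> A" "f u \<in> B' \<longleftrightarrow> u \<in> B" if "u \<in> V" for u
    using that g h G H unfolding f_def complete_bipartite_def bij_betw_def by auto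
  then show ?thesis
    using bij G H unfolding graph_iso_def complete_bipartite_def bij_betw_def by auto
qed

lemma complete_bipartite_iso_transfer:
  assumes "graph_iso V E W F" "complete_bipartite W F A B"
  obtains A' B' where "complete_bipartite V E A' B'" "card A' = card A" "card B' = card B"
proof -
  obtain f where f: "bij_betw f V W" and edges: "\<forall>u\<in>V. \<forall>v\<in>V. E u v \<longleftrightarrow> F (f u) (f v)"
    using assms(1) unfolding graph_iso_def by blast
  have card_preimage: "card (V \<inter> f -` X) = card X" if "X \<subseteq> W" for X
  proof -
    have "f ` (V \<inter> f -` X) = X" using f that unfolding bij_betw_def by auto
    then show ?thesis using f by (metis bij_betw_same_card bij_betw_subset inf_le1)
  qed
  have "complete_bipartite V E (V \<inter> f -` A) (V \<inter> f -` B)"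
    unfolding complete_bipartite_def
  proof (intro conjI ballI)
    show "V = V \<inter> f -` A \<union> V \<inter> f -` B" "V \<inter> f -` A \<inter> (V \<inter> f -` B) = {}"
      using assms(2) f unfolding complete_bipartite_def bij_betw_def by auto
    fix u v assume "u \<in> V" "v \<in> V"
    then have "f u \<in> W" "f v \<in> W" using f unfolding bij_betw_def by auto
    then have "F (f u) (f v) \<longleftrightarrow> (f u \<in> A \<longleftrightarrow> f v \<in> B)"
      using assms(2) unfolding complete_bipartite_def by blast
    then show "E u v \<longleftrightarrow> (u \<in> V \<inter> f -` A \<longleftrightarrow> v \<in> V \<inter> f -` B)"
      using edges \<open>u \<in> V\<close> \<open>v \<in> V\<close> by auto
  qed
  moreover have "card (V \<inter> f -` A) = card A" "card (V \<inter> f -` B) = card B"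
    using assms(2) by (auto simp: complete_bipartite_def intro!: card_preimage)
  ultimately show ?thesis by (rule that)
qed

lemma simple_graph_turan: "simple_graph (turan_V n) (turan_E n t)"
  unfolding simple_graph_def turan_V_def turan_E_def by auto

lemma complete_bipartite_turan2:
  "complete_bipartite (turan_V n) (turan_E n 2) {i \<in> {..<n}. even i} {i \<in> {..<n}. odd i}"
  unfolding complete_bipartite_def turan_V_def turan_E_def by (auto simp: mod2_eq_if)

lemma card_even_below: "card {i \<in> {..<n}. even i} = (n + 1) div 2"
proof -
  have "{i \<in> {..<n}. even i} = (\<lambda>k. 2 * k) ` {..<(n + 1) div 2}"
    by (auto elim!: evenE)
  then show ?thesis by (simp add: card_image inj_on_def)
qed

lemma card_odd_below: "card {i \<in> {..<n}. odd i} = n div 2"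
proof -
  have "{i \<in> {..<n}. odd i} = (\<lambda>k. 2 * k + 1) ` {..<n div 2}"
    by (auto elim!: oddE)
  then show ?thesis by (simp add: card_image inj_on_def)
qed

lemma ABC_turan2: "ABC (turan_V n) (turan_E n 2) = sqrt (real ((n + 1) div 2 * (n div 2)) * (real n - 2))"
  using ABC_complete_bipartite[OF simple_graph_turan complete_bipartite_turan2]
  unfolding card_even_below card_odd_below by (simp add: turan_V_def)

lemma ABC_eq_ABC_turan2_if_iso:
  assumes "simple_graph V E" "graph_iso V E (turan_V n) (turan_E n 2)"
  shows "ABC V E = ABC (turan_V n) (turan_E n 2)"
proof -
  obtain A B where "complete_bipartite V E A B" "card A = (n + 1) div 2" "card B = n div 2"
    using complete_bipartite_iso_transfer[OF assms(2) complete_bipartite_turan2]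
    unfolding card_even_below card_odd_below .
  moreover have "card V = n"
    using assms(2) unfolding graph_iso_def turan_V_def by (metis bij_betw_same_card card_lessThan)
  ultimately show ?thesis using ABC_complete_bipartite[OF assms(1)] ABC_turan2 by simp
qed

lemma sqrt_split_product_le:
  fixes a b n :: nat
  assumes split: "a + b = n" and "0 < a" "0 < b"
  defines "T \<equiv> sqrt (real ((n + 1) div 2 * (n div 2)) * (real n - 2))"
  shows "sqrt (real (a * b) * (real n - 2)) \<le> T"
    and "sqrt (real (a * b) * (real n - 2)) = T \<Longrightarrow> a = n div 2 \<or> b = n div 2"
proof -
  have "2 \<le> n" using assms by linarith
  have "real (a * b) \<le> real ((n + 1) div 2 * (n div 2))"
    using mult_le_balanced_split[OF split] by (simp only: of_nat_le_iff)
  then show "sqrt (real (a * b) * (real n - 2)) \<le> T"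
    unfolding T_def using \<open>2 \<le> n\<close> by (intro real_sqrt_le_mono mult_right_mono) auto
  assume eq: "sqrt (real (a * b) * (real n - 2)) = T"
  show "a = n div 2 \<or> b = n div 2"
  proof (cases "n = 2")
    case True
    then show ?thesis using assms by auto
  next
    case False
    then have "real (a * b) = real ((n + 1) div 2 * (n div 2))"
      using eq \<open>2 \<le> n\<close> unfolding T_def by simp
    then show ?thesis using mult_eq_balanced_split_iff[OF split] by (simp only: of_nat_eq_iff)
  qed
qed

lemma iso_turan2_if_balanced:
  assumes complete: "complete_bipartite V E A B" and "finite A" "finite B"
    and split: "card A + card B = n" and balanced: "card A = n div 2 \<or> card B = n div 2"
  shows "graph_iso V E (turan_V n) (turan_E n 2)"
  using balanced
proof
  assume "card A = n div 2"
  then show ?thesis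
    using complete_bipartite_iso[OF complete complete_bipartite_swap[OF complete_bipartite_turan2],
        unfolded card_even_below card_odd_below] split assms(2,3) by simp
next
  assume "card B = n div 2"
  then show ?thesis
    using complete_bipartite_iso[OF complete complete_bipartite_turan2,
        unfolded card_even_below card_odd_below] split assms(2,3) by simp
qed

lemma (in bipartite_graph) ABC_le_ABC_turan2:
  assumes no_isolated: "\<And>v. v \<in> V \<Longrightarrow> 0 < degree V E v" and "V \<noteq> {}"
  defines "n \<equiv> card V"
  shows "ABC V E \<le> ABC (turan_V n) (turan_E n 2)"
    and "ABC V E = ABC (turan_V n) (turan_E n 2) \<Longrightarrow> graph_iso V E (turan_V n) (turan_E n 2)"
proof -
  have split: "card A + card B = n" using card_V n_def by simp
  have "0 < card A" "0 < card B"
    using parts_nonempty[OF no_isolated \<open>V \<noteq> {}\<close>] finite_A finite_B by auto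
  note parts_le = sqrt_split_product_le[OF split this, folded ABC_turan2]
  have ABC_le: "ABC V E \<le> sqrt (real (card A * card B) * (real n - 2))"
    using ABC_le_parts(1)[OF no_isolated \<open>V \<noteq> {}\<close>] n_def by simp
  then show "ABC V E \<le> ABC (turan_V n) (turan_E n 2)" using parts_le(1) by linarith
  assume eq: "ABC V E = ABC (turan_V n) (turan_E n 2)"
  then have "\<forall>u\<in>A. \<forall>v\<in>B. E u v"
    using ABC_le parts_le(1) ABC_le_parts(2)[OF no_isolated \<open>V \<noteq> {}\<close>] n_def by simp
  moreover have "card A = n div 2 \<or> card B = n div 2"
    using eq ABC_le parts_le by linarith
  ultimately show "graph_iso V E (turan_V n) (turan_E n 2)"
    using iso_turan2_if_balanced complete_bipartite_if_complete finite_A finite_B split by blast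
qed

lemma colorable_card:
  assumes "simple_graph V E"
  shows "colorable V E (card V)"
proof -
  have "finite V" and irrefl: "\<And>v. \<not> E v v" using assms unfolding simple_graph_def by auto
  then obtain f where f: "bij_betw f V {0..<card V}" by (metis ex_bij_betw_finite_nat)
  have "f u \<noteq> f v" if "u \<in> V" "v \<in> V" "E u v" for u v
    using f that irrefl unfolding bij_betw_def inj_on_def by metis
  moreover have "f v < card V" if "v \<in> V" for v using f that unfolding bij_betw_def by auto
  ultimately show ?thesis unfolding colorable_def by blast
qed

lemma colorable_chromatic_number: "simple_graph V E \<Longrightarrow> colorable V E (chromatic_number V E)"
  unfolding chromatic_number_def by (rule LeastI[of "colorable V E", OF colorable_card])

lemma edge_if_chromatic_number_ge_2:
  assumes "2 \<le> chromatic_number V E"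
  obtains u v where "E u v"
proof -
  have "chromatic_number V E \<le> 1" if "\<forall>u v. \<not> E u v"
    unfolding chromatic_number_def using that
    by (intro Least_le) (auto simp: colorable_def intro: exI[of _ "\<lambda>_. 0"])
  then show ?thesis using assms that by fastforce
qed

lemma degree_pos_if_connected:
  assumes "simple_graph V E" "graph_connected V E" "E x y" "v \<in> V"
  shows "0 < degree V E v"
proof -
  have "x \<in> V" "y \<in> V" "x \<noteq> y" using assms(1,3) unfolding simple_graph_def by auto
  then obtain w where "w \<in> V" "w \<noteq> v" by blast
  then have "E\<^sup>*\<^sup>* v w" using assms(2,4) unfolding graph_connected_def by blast
  then obtain z where "E v z"
    using \<open>w \<noteq> v\<close> by (cases rule: converse_rtranclpE) auto
  then have "z \<in> {z \<in> V. E v z}" using assms(1) unfolding simple_graph_def by auto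
  moreover have "finite {z \<in> V. E v z}" using assms(1) unfolding simple_graph_def by simp
  ultimately show ?thesis unfolding degree_def by (auto simp: card_gt_0_iff)
qed

lemma bipartite_graph_if_colorable_2:
  assumes "simple_graph V E" "colorable V E 2"
  obtains A B where "bipartite_graph V E A B"
proof -
  obtain c :: "'a \<Rightarrow> nat" where c: "\<forall>v\<in>V. c v < 2" "\<forall>u\<in>V. \<forall>v\<in>V. E u v \<longrightarrow> c u \<noteq> c v"
    using assms(2) unfolding colorable_def by blast
  have "bipartite_graph V E {v \<in> V. c v = 0} {v \<in> V. c v = 1}"
  proof
    show "V = {v \<in> V. c v = 0} \<union> {v \<in> V. c v = 1}" using c(1) by (auto simp: less_2_cases_iff)
    show "{v \<in> V. c v = 0} \<inter> {v \<in> V. c v = 1} = {}" by auto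
    fix u v assume "E u v"
    then have "u \<in> V" "v \<in> V" using assms(1) unfolding simple_graph_def by auto
    moreover have "c u < 2" "c v < 2" "c u \<noteq> c v" using c \<open>E u v\<close> calculation by auto
    ultimately show "u \<in> {v \<in> V. c v = 0} \<longleftrightarrow> v \<in> {v \<in> V. c v = 1}" by auto
  qed (rule assms(1))
  then show ?thesis by (rule that)
qed

theorem proposition5p2:
  fixes V :: "'a set" and E :: "'a \<Rightarrow> 'a \<Rightarrow> bool" and n :: nat
  assumes "simple_graph V E"
    and "graph_connected V E"
    and "chromatic_number V E = 2"
    and "n = card V"
  shows "(even n \<longrightarrow>
            ABC V E \<le> real n / 2 * sqrt (real n - 2) \<and>
            (ABC V E = real n / 2 * sqrt (real n - 2) \<longleftrightarrow>
               graph_iso V E (turan_V n) (turan_E n 2)))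
       \<and> (odd n \<longrightarrow>
            ABC V E \<le> 1 / 2 * sqrt ((real n - 2) * (real n ^ 2 - 1)) \<and>
            (ABC V E = 1 / 2 * sqrt ((real n - 2) * (real n ^ 2 - 1)) \<longleftrightarrow>
               graph_iso V E (turan_V n) (turan_E n 2)))"
proof -
  have "colorable V E 2" using colorable_chromatic_number[OF assms(1)] assms(3) by simp
  then obtain A B where bipartite: "bipartite_graph V E A B"
    by (rule bipartite_graph_if_colorable_2[OF assms(1)])
  have "2 \<le> chromatic_number V E" using assms(3) by simp
  then obtain x y where "E x y" by (rule edge_if_chromatic_number_ge_2)
  then have no_isolated: "\<And>v. v \<in> V \<Longrightarrow> 0 < degree V E v"
    by (rule degree_pos_if_connected[OF assms(1,2)])
  have "V \<noteq> {}" using assms(2) unfolding graph_connected_def by simp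
  note turan2 = bipartite_graph.ABC_le_ABC_turan2[OF bipartite no_isolated \<open>V \<noteq> {}\<close>,
      folded assms(4)]
  have "ABC V E \<le> ABC (turan_V n) (turan_E n 2) \<and>
        (ABC V E = ABC (turan_V n) (turan_E n 2) \<longleftrightarrow> graph_iso V E (turan_V n) (turan_E n 2))"
    using turan2 ABC_eq_ABC_turan2_if_iso[OF assms(1)] by blast
  then show ?thesis
    unfolding ABC_turan2
    using sqrt_balanced_product_even[of n] sqrt_balanced_product_odd[of n] by argo
qed

end
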